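(* For any quantile vector $\mathbf{q}=(q_1\ge\dots\ge q_N)$ with $q_i\in(0,1)$, with $\pi$ uniformly random from $\Pi_{n,m,c}$, $\mathbb{E}_\pi[\mathrm{OPT}(\mathbf{q},\pi)-\mathrm{STR}(\mathbf{q},\pi)\mid\mathcal{E}_2]\le\mathbb{E}_{i,j}[b(q_i)-s(q_j)]$, where $i$ is uniform on $I_1$ and $j$ is uniform on $J_1$, independently.
   Context: Setting: distributions $F_B,F_S$ with quantile functions $b(q)=\inf\{x:\Pr_{b\sim F_B}[b\le x]\ge q\}$, $s(q)=\inf\{x:\Pr_{s\sim F_S}[s\le x]\ge q\}$, and $b(q)\ge s(q)$ for all $q\in(0,1)$. Integers $m\ge n\ge 20$ and $c\ge1$; $N=m+n+2c$. $\Pi_{n,m,c}$ is the set of maps $\pi:[N]\to\{\mathrm{BO},\mathrm{BN},\mathrm{SO},\mathrm{SN}\}$ with $m$, $c$, $n$, $c$ preimages respectively of $\mathrm{BO},\mathrm{BN},\mathrm{SO},\mathrm{SN}$; write $B_{\mathrm{Old}}^\pi,B_{\mathrm{New}}^\pi,S_{\mathrm{Old}}^\pi,S_{\mathrm{New}}^\pi$ for these preimages. Index $i$ labeled as buyer gives a buyer with value $b(q_i)$, labeled as seller gives a seller with value $s(q_i)$; the original market consists of old buyers and old sellers, the augmented market of all agents. $\mathrm{OPT}(\mathbf{q},\pi)$ is the first-best gains from trade in the original market; $\mathrm{STR}(\mathbf{q},\pi)$ is the gains from trade of Seller Trade Reduction in the augmented market. (First best: with buyer values $b^{(1)}\ge\dots$,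 seller values $s^{(1)}\le\dots$, $r=\max\{i: b^{(i)}\ge s^{(i)}\}$ ($0$ if none), trade top $r$ buyers with bottom $r$ sellers, gains $\sum_{i\le r}(b^{(i)}-s^{(i)})$. STR: with $s^{(k)}=\infty$ beyond the number of sellers, if $b^{(r)}\ge s^{(r+1)}$ trade $r$ pairs, else only the top $r-1$ buyers with bottom $r-1$ sellers.) Let $p=\lceil n/10\rceil$, $I_1=\{1,\dots,p\}$, $I_2=\{p+1,\dots,2p\}$, $J_1=\{N-p+1,\dots,N\}$, $J_2=\{N-2p+1,\dots,N-p\}$. $\mathcal{E}_1$ is the set of $\pi$ with $|I_1\cap B_{\mathrm{New}}^\pi|\ge2$, $|I_2\cap B_{\mathrm{Old}}^\pi|\ge1$, $|J_1\cap S_{\mathrm{New}}^\pi|\ge2$, $|J_2\cap S_{\mathrm{Old}}^\pi|\ge1$. $\mathcal{E}_2=\{\pi:\pi\notin\mathcal{E}_1,\ S_{\mathrm{New}}^\pi\subseteq\{1,\dots,2n+2c\}\}$ (assumed nonempty so the conditioning is defined). *)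

theory Defs
  imports "HOL-Probability.Probability" "HOL-Library.FuncSet"
begin

datatype agent = BO | BN | SO | SN

definition quantile :: "real measure \<Rightarrow> real \<Rightarrow> real" where
  "quantile M u = Inf {x. cdf M x \<ge> u}"

text \<open>Labelings with m old buyers, c new buyers, n old sellers, c new sellers on {1..N}.\<close>
definition Pi_nmc :: "nat \<Rightarrow> nat \<Rightarrow> nat \<Rightarrow> (nat \<Rightarrow> agent) set" where
  "Pi_nmc n m c = {\<pi> \<in> {1..m+n+2*c} \<rightarrow>\<^sub>E UNIV.
      card {i\<in>{1..m+n+2*c}. \<pi> i = BO} = m \<and> card {i\<in>{1..m+n+2*c}. \<pi> i = BN} = c \<and>
      card {i\<in>{1..m+n+2*c}. \<pi> i = SO} = n \<and> card {i\<in>{1..m+n+2*c}. \<pi> i = SN} = c}"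

definition vals :: "(real \<Rightarrow> real) \<Rightarrow> (nat \<Rightarrow> real) \<Rightarrow> (nat \<Rightarrow> agent) \<Rightarrow> nat \<Rightarrow> agent set \<Rightarrow> real list" where
  "vals f q \<pi> N L = map (\<lambda>i. f (q i)) (filter (\<lambda>i. \<pi> i \<in> L) [1..<N+1])"

text \<open>Buyer values sorted decreasingly (b^(1) >= ...), seller values increasingly; 1-indexed.\<close>
definition bord :: "real list \<Rightarrow> nat \<Rightarrow> real" where
  "bord B i = rev (sort B) ! (i - 1)"
definition sord :: "real list \<Rightarrow> nat \<Rightarrow> real" where
  "sord S i = sort S ! (i - 1)"

definition trade_r :: "real list \<Rightarrow> real list \<Rightarrow> nat" where
  "trade_r B S = Max ({0} \<union> {i. 1 \<le> i \<and> i \<le> length B \<and> i \<le> length S \<and> bord B i \<ge> sord S i})"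

definition gft :: "real list \<Rightarrow> real list \<Rightarrow> nat \<Rightarrow> real" where
  "gft B S k = (\<Sum>i=1..k. bord B i - sord S i)"

definition first_best :: "real list \<Rightarrow> real list \<Rightarrow> real" where
  "first_best B S = gft B S (trade_r B S)"

text \<open>Seller Trade Reduction: s^(r+1) = infinity if r+1 exceeds the number of sellers.\<close>
definition str_gft :: "real list \<Rightarrow> real list \<Rightarrow> real" where
  "str_gft B S = (let r = trade_r B S in
     gft B S (if 1 \<le> r \<and> r + 1 \<le> length S \<and> bord B r \<ge> sord S (r + 1) then r else r - 1))"

definition OPT_fb :: "(real \<Rightarrow> real) \<Rightarrow> (real \<Rightarrow> real) \<Rightarrow> (nat \<Rightarrow> real) \<Rightarrow> (nat \<Rightarrow> agent) \<Rightarrow> nat \<Rightarrow> real" where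
  "OPT_fb b s q \<pi> N = first_best (vals b q \<pi> N {BO}) (vals s q \<pi> N {SO})"

definition STR_mech :: "(real \<Rightarrow> real) \<Rightarrow> (real \<Rightarrow> real) \<Rightarrow> (nat \<Rightarrow> real) \<Rightarrow> (nat \<Rightarrow> agent) \<Rightarrow> nat \<Rightarrow> real" where
  "STR_mech b s q \<pi> N = str_gft (vals b q \<pi> N {BO, BN}) (vals s q \<pi> N {SO, SN})"

definition E1 :: "nat \<Rightarrow> nat \<Rightarrow> nat \<Rightarrow> (nat \<Rightarrow> agent) set" where
  "E1 n m c = (let N = m+n+2*c; p = nat \<lceil>real n / 10\<rceil> in
     {\<pi> \<in> Pi_nmc n m c.
        card ({1..p} \<inter> {i. \<pi> i = BN}) \<ge> 2 \<and> card ({p+1..2*p} \<inter> {i. \<pi> i = BO}) \<ge> 1 \<and>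
        card ({N-p+1..N} \<inter> {i. \<pi> i = SN}) \<ge> 2 \<and> card ({N-2*p+1..N-p} \<inter> {i. \<pi> i = SO}) \<ge> 1})"

definition E2 :: "nat \<Rightarrow> nat \<Rightarrow> nat \<Rightarrow> (nat \<Rightarrow> agent) set" where
  "E2 n m c = {\<pi> \<in> Pi_nmc n m c. \<pi> \<notin> E1 n m c \<and>
      {i\<in>{1..m+n+2*c}. \<pi> i = SN} \<subseteq> {1..2*n+2*c}}"

end

theory Submission
  imports Defs
begin

text \<open>The new agents only improve the first-best trade, so
  \<open>OPT - STR\<close> is at most the gain \<open>b (q \<beta>) - s (q \<sigma>)\<close> of the last efficient pair of the
  augmented market when Seller Trade Reduction drops it. A dropped buyer \<open>\<beta>\<close> lies behind the first
  excluded seller, which forces \<open>\<beta> \<ge> p\<close>; and if \<open>\<sigma> > N - p + 1\<close> then at most \<open>p - 2\<close> buyers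
  occupy the first \<open>n + c - p + 1\<close> positions. Hence the loss is at most
  \<open>b (q p) - s (q (N - p + 1))\<close>, plus \<open>s (q (N - p + 1)) - s (q N)\<close> on this event of few early
  buyers.

  The event has conditional probability at most \<open>1 / p\<close> given \<open>E2\<close>: exchanging the labels of
  \<open>a\<close> and \<open>a + d\<close> for all \<open>a\<close> in a subset of \<open>A = {2p+1..n+c-p+1}\<close>, \<open>d = card A\<close>, permutes
  \<open>E2\<close>, and for a fixed labelling so many of these pairs are mixed (one buyer, one seller) that a
  binomial tail bound leaves at most \<open>2 ^ d / p\<close> exchanges with few early buyers.
  Monotonicity of the values finally bounds \<open>b (q p) - s (q (N-p+1)) + (s (q (N-p+1)) - s (q N)) / p\<close>
  by the mean of \<open>b (q i) - s (q j)\<close> over \<open>I\<^sub>1 \<times> J\<^sub>1\<close>.\<close>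

section \<open>Order statistics and Seller Trade Reduction\<close>

lemma bord_antimono:
  assumes "1 \<le> i" "i \<le> j" "j \<le> length B"
  shows "bord B j \<le> bord B i"
  using assms by (simp add: bord_def rev_nth sorted_nth_mono)

lemma sord_mono:
  assumes "1 \<le> i" "i \<le> j" "j \<le> length S"
  shows "sord S i \<le> sord S j"
  using assms by (simp add: sord_def sorted_nth_mono)

lemma trade_r_mem:
  "trade_r B S \<in> {0} \<union> {i. 1 \<le> i \<and> i \<le> length B \<and> i \<le> length S \<and> sord S i \<le> bord B i}"
  unfolding trade_r_def by (rule Max_in) (auto intro: finite_subset[of _ "{..length B}"])

lemma le_trade_r:
  assumes "1 \<le> i" "i \<le> length B" "i \<le> length S" "sord S i \<le> bord B i"
  shows "i \<le> trade_r B S"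
  unfolding trade_r_def
  by (rule Max_ge) (use assms in \<open>auto intro: finite_subset[of _ "{..length B}"]\<close>)

lemma trade_r_le_length: "trade_r B S \<le> length B" "trade_r B S \<le> length S"
  using trade_r_mem[of B S] by auto

lemma sord_le_bord_below_trade_r:
  assumes "1 \<le> i" "i \<le> trade_r B S"
  shows "sord S i \<le> bord B i"
proof -
  have "sord S i \<le> sord S (trade_r B S)"
    using sord_mono assms trade_r_le_length by blast
  also have "\<dots> \<le> bord B (trade_r B S)" using trade_r_mem[of B S] assms by auto
  also have "\<dots> \<le> bord B i" using bord_antimono assms trade_r_le_length by blast
  finally show ?thesis .
qed

lemma gft_Suc: "gft B S (Suc k) = gft B S k + (bord B (Suc k) - sord S (Suc k))"
  by (simp add: gft_def)

lemma gft_mono_below_trade_r: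
  assumes "j \<le> k" "k \<le> trade_r B S"
  shows "gft B S j \<le> gft B S k"
  using assms
proof (induction k)
  case (Suc k)
  show ?case
  proof (cases "j = Suc k")
    case False
    then have "gft B S j \<le> gft B S k" using Suc by simp
    moreover have "sord S (Suc k) \<le> bord B (Suc k)"
      using sord_le_bord_below_trade_r Suc.prems by simp
    ultimately show ?thesis by (simp add: gft_Suc)
  qed simp
qed simp

lemma first_best_le_augmented:
  assumes "length B \<le> length B'" "length S \<le> length S'"
    and bord_le: "\<And>k. 1 \<le> k \<Longrightarrow> k \<le> length B \<Longrightarrow> bord B k \<le> bord B' k"
    and sord_le: "\<And>k. 1 \<le> k \<Longrightarrow> k \<le> length S \<Longrightarrow> sord S' k \<le> sord S k"
  shows "first_best B S \<le> first_best B' S'"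
proof -
  define r where "r = trade_r B S"
  have r_le: "r \<le> length B" "r \<le> length S" using trade_r_le_length r_def by auto
  have "r \<le> trade_r B' S'"
  proof (cases "r = 0")
    case False
    have "sord S' r \<le> sord S r" using sord_le r_le False by simp
    also have "\<dots> \<le> bord B r" using sord_le_bord_below_trade_r False r_def by simp
    also have "\<dots> \<le> bord B' r" using bord_le r_le False by simp
    finally show ?thesis using le_trade_r False r_le assms(1,2) by simp
  qed simp
  have "first_best B S = gft B S r" by (simp add: first_best_def r_def)
  also have "\<dots> \<le> gft B' S' r" unfolding gft_def
    by (rule sum_mono) (use bord_le sord_le r_le in \<open>auto intro: diff_mono\<close>)
  also have "\<dots> \<le> first_best B' S'"
    unfolding first_best_def using gft_mono_below_trade_r \<open>r \<le> trade_r B' S'\<close> by blast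
  finally show ?thesis .
qed

definition str_reduces :: "real list \<Rightarrow> real list \<Rightarrow> bool" where
  "str_reduces B S \<longleftrightarrow> (let r = trade_r B S in
     1 \<le> r \<and> \<not> (r + 1 \<le> length S \<and> sord S (r + 1) \<le> bord B r))"

lemma first_best_minus_str_gft:
  "first_best B S - str_gft B S =
     (if str_reduces B S then bord B (trade_r B S) - sord S (trade_r B S) else 0)"
proof (cases "str_reduces B S")
  case True
  then have "1 \<le> trade_r B S" by (simp add: str_reduces_def Let_def)
  then have "gft B S (trade_r B S) = gft B S (trade_r B S - 1)
      + (bord B (trade_r B S) - sord S (trade_r B S))"
    using gft_Suc[of B S "trade_r B S - 1"] by simp
  with True show ?thesis
    by (auto simp: first_best_def str_gft_def str_reduces_def Let_def)
next
  case False
  then show ?thesis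
    by (cases "trade_r B S = 0") (auto simp: first_best_def str_gft_def str_reduces_def Let_def)
qed

section \<open>Positions of labels\<close>

lemma strict_sorted_nth_add_le:
  assumes "sorted_wrt (<) xs" "i \<le> j" "j < length xs"
  shows "xs ! i + (j - i) \<le> (xs ! j :: nat)"
  using assms(2,3)
proof (induction j)
  case (Suc j)
  show ?case
  proof (cases "i = Suc j")
    case False
    then have "xs ! i + (j - i) \<le> xs ! j" using Suc by simp
    moreover have "xs ! j < xs ! Suc j" using sorted_wrt_nth_less[OF assms(1)] Suc.prems by simp
    ultimately show ?thesis using False Suc.prems by simp
  qed simp
qed simp

lemma card_less_nth_strict_sorted:
  fixes xs :: "nat list"
  assumes "sorted_wrt (<) xs" "j < length xs"
  shows "card {x \<in> set xs. x < xs ! j} \<le> j"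
proof -
  have "{x \<in> set xs. x < xs ! j} \<subseteq> set (take j xs)"
  proof
    fix x assume "x \<in> {x \<in> set xs. x < xs ! j}"
    then obtain i where i: "i < length xs" "x = xs ! i" "xs ! i < xs ! j"
      by (auto simp: in_set_conv_nth)
    have "\<not> j < i" using sorted_wrt_nth_less[OF assms(1), of j i] i by auto
    with i(3) have "i < j" by (metis less_irrefl linorder_neqE_nat)
    then show "x \<in> set (take j xs)" using i by (auto simp: in_set_conv_nth)
  qed
  then have "card {x \<in> set xs. x < xs ! j} \<le> card (set (take j xs))" by (simp add: card_mono)
  also have "\<dots> \<le> j" using card_length[of "take j xs"] by simp
  finally show ?thesis .
qed

lemma sorted_wrt_nth_filter:
  assumes "transp R" "reflp R" "sorted_wrt R xs" "j < length (filter P xs)"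
  shows "R (xs ! j) (filter P xs ! j)"
  using assms(3,4)
proof (induction xs arbitrary: j)
  case (Cons x xs)
  show ?case
  proof (cases "P x")
    case True
    then show ?thesis using Cons reflpD[OF assms(2)] by (cases j) auto
  next
    case False
    then have j: "j < length (filter P xs)" using Cons.prems by simp
    then have "j < length xs" using length_filter_le[of P xs] by linarith
    then have "R ((x # xs) ! j) (xs ! j)"
      using Cons.prems(1) by (cases j) (auto simp: sorted_wrt_nth_less)
    moreover have "R (xs ! j) (filter P xs ! j)" using Cons j by simp
    ultimately show ?thesis using False transpD[OF assms(1)] by simp
  qed
qed simp

lemma sort_map_antitone:
  fixes g :: "'a::linorder \<Rightarrow> 'b::linorder"
  assumes "sorted_wrt (<) xs" "antimono_on (set xs) g"
  shows "sort (map g xs) = rev (map g xs)"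
proof (rule properties_for_sort)
  have "sorted_wrt (\<lambda>x y. g y \<le> g x) xs"
    using sorted_wrt_mono_rel[OF _ assms(1), of "\<lambda>x y. g y \<le> g x"] assms(2)
    by (auto simp: monotone_on_def)
  then show "sorted (rev (map g xs))" by (simp add: sorted_wrt_rev sorted_wrt_map)
qed simp

lemma bord_map_antitone:
  fixes xs :: "'a::linorder list"
  assumes "sorted_wrt (<) xs" "antimono_on (set xs) g" "1 \<le> k" "k \<le> length xs"
  shows "bord (map g xs) k = g (xs ! (k - 1))"
  using assms unfolding bord_def sort_map_antitone[OF assms(1,2)] by simp

lemma sord_map_antitone:
  fixes xs :: "'a::linorder list"
  assumes "sorted_wrt (<) xs" "antimono_on (set xs) g" "1 \<le> k" "k \<le> length xs"
  shows "sord (map g xs) k = g (xs ! (length xs - k))"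
  using assms unfolding sord_def sort_map_antitone[OF assms(1,2)] by (simp add: rev_nth)

definition positions :: "(nat \<Rightarrow> agent) \<Rightarrow> nat \<Rightarrow> agent set \<Rightarrow> nat list" where
  "positions \<pi> N L = filter (\<lambda>i. \<pi> i \<in> L) [1..<N+1]"

lemma vals_eq_map_positions: "vals f q \<pi> N L = map (\<lambda>i. f (q i)) (positions \<pi> N L)"
  by (simp add: vals_def positions_def)

lemma sorted_wrt_positions: "sorted_wrt (<) (positions \<pi> N L)"
  unfolding positions_def by (intro sorted_wrt_filter sorted_wrt_upt)

lemma set_positions: "set (positions \<pi> N L) = {i \<in> {1..N}. \<pi> i \<in> L}"
  unfolding positions_def by auto

lemma length_positions: "length (positions \<pi> N L) = card {i \<in> {1..N}. \<pi> i \<in> L}"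
  by (metis distinct_card distinct_filter distinct_upt positions_def set_positions)

lemma length_positions_le: "length (positions \<pi> N L) \<le> N"
  unfolding positions_def by (metis diff_add_inverse2 length_filter_le length_upt)

lemma length_vals: "length (vals f q \<pi> N L) = length (positions \<pi> N L)"
  by (simp add: vals_eq_map_positions)

lemma positions_nth_mem:
  "j < length (positions \<pi> N L) \<Longrightarrow> positions \<pi> N L ! j \<in> {1..N}"
  using nth_mem set_positions by blast

lemma positions_filter: "L \<subseteq> L' \<Longrightarrow> positions \<pi> N L = filter (\<lambda>i. \<pi> i \<in> L) (positions \<pi> N L')"
  unfolding positions_def by (auto intro: filter_cong)

lemma positions_nth_bounds:
  assumes "j < length (positions \<pi> N L)"
  shows "j + 1 \<le> positions \<pi> N L ! j"
    and "positions \<pi> N L ! j + (length (positions \<pi> N L) - 1 - j) \<le> N"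
proof -
  let ?xs = "positions \<pi> N L"
  have "?xs ! 0 \<in> set ?xs" "?xs ! (length ?xs - 1) \<in> set ?xs"
    using assms by (auto intro!: nth_mem)
  then have "?xs ! 0 \<in> {1..N}" "?xs ! (length ?xs - 1) \<in> {1..N}"
    unfolding set_positions by auto
  moreover have "?xs ! 0 + j \<le> ?xs ! j" "?xs ! j + (length ?xs - 1 - j) \<le> ?xs ! (length ?xs - 1)"
    using strict_sorted_nth_add_le[OF sorted_wrt_positions, of 0 j]
      strict_sorted_nth_add_le[OF sorted_wrt_positions, of j "length ?xs - 1"] assms by auto
  ultimately show "j + 1 \<le> ?xs ! j" "?xs ! j + (length ?xs - 1 - j) \<le> N"
    by auto
qed

lemma card_before_positions_nth:
  assumes "j < length (positions \<pi> N L)" "t < positions \<pi> N L ! j"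
  shows "card {i \<in> {1..t}. \<pi> i \<in> L} \<le> j"
proof -
  have "t \<le> N" using positions_nth_bounds(2)[OF assms(1)] assms(2) by linarith
  then have "{i \<in> {1..t}. \<pi> i \<in> L} \<subseteq> {x \<in> set (positions \<pi> N L). x < positions \<pi> N L ! j}"
    using assms(2) by (auto simp: set_positions)
  then have "card {i \<in> {1..t}. \<pi> i \<in> L} \<le> card {x \<in> set (positions \<pi> N L). x < positions \<pi> N L ! j}"
    by (intro card_mono) auto
  also have "\<dots> \<le> j" by (rule card_less_nth_strict_sorted[OF sorted_wrt_positions assms(1)])
  finally show ?thesis .
qed

lemma card_label_pair:
  assumes "a \<noteq> a'" "finite A"
  shows "card {i \<in> A. \<pi> i \<in> {a, a'}} = card {i \<in> A. \<pi> i = a} + card {i \<in> A. \<pi> i = a'}"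
proof -
  have "{i \<in> A. \<pi> i \<in> {a, a'}} = {i \<in> A. \<pi> i = a} \<union> {i \<in> A. \<pi> i = a'}" by auto
  then show ?thesis using assms by (simp add: card_Un_disjoint disjoint_iff)
qed

lemma card_buyers_Pi_nmc:
  "\<pi> \<in> Pi_nmc n m c \<Longrightarrow> card {i \<in> {1..m + n + 2 * c}. \<pi> i \<in> {BO, BN}} = m + c"
  using card_label_pair[of BO BN "{1..m + n + 2 * c}" \<pi>] by (simp add: Pi_nmc_def)

lemma card_sellers_Pi_nmc:
  "\<pi> \<in> Pi_nmc n m c \<Longrightarrow> card {i \<in> {1..m + n + 2 * c}. \<pi> i \<in> {SO, SN}} = n + c"
  using card_label_pair[of SO SN "{1..m + n + 2 * c}" \<pi>] by (simp add: Pi_nmc_def)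

section \<open>The loss on a single labelling\<close>

definition few_early_buyers :: "nat \<Rightarrow> nat \<Rightarrow> nat \<Rightarrow> (nat \<Rightarrow> agent) \<Rightarrow> bool" where
  "few_early_buyers n c p \<pi> \<longleftrightarrow> card {i \<in> {1..n + c - p + 1}. \<pi> i \<in> {BO, BN}} \<le> p - 2"

locale quantile_profile =
  fixes b s :: "real \<Rightarrow> real" and q :: "nat \<Rightarrow> real" and N :: nat
  assumes b_antimono: "antimono_on {1..N} (\<lambda>i. b (q i))"
    and s_antimono: "antimono_on {1..N} (\<lambda>i. s (q i))"
    and s_le_b: "\<And>i. i \<in> {1..N} \<Longrightarrow> s (q i) \<le> b (q i)"
begin

lemma b_antimonoD: "i \<in> {1..N} \<Longrightarrow> j \<in> {1..N} \<Longrightarrow> i \<le> j \<Longrightarrow> b (q j) \<le> b (q i)"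
  using monotone_onD[OF b_antimono] by blast

lemma s_antimonoD: "i \<in> {1..N} \<Longrightarrow> j \<in> {1..N} \<Longrightarrow> i \<le> j \<Longrightarrow> s (q j) \<le> s (q i)"
  using monotone_onD[OF s_antimono] by blast

lemma bord_vals:
  assumes "1 \<le> k" "k \<le> length (positions \<pi> N L)"
  shows "bord (vals b q \<pi> N L) k = b (q (positions \<pi> N L ! (k - 1)))"
  unfolding vals_eq_map_positions
  by (rule bord_map_antitone[OF sorted_wrt_positions monotone_on_subset[OF b_antimono] assms])
    (auto simp: set_positions)

lemma sord_vals:
  assumes "1 \<le> k" "k \<le> length (positions \<pi> N L)"
  shows "sord (vals s q \<pi> N L) k = s (q (positions \<pi> N L ! (length (positions \<pi> N L) - k)))"
  unfolding vals_eq_map_positions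
  by (rule sord_map_antitone[OF sorted_wrt_positions monotone_on_subset[OF s_antimono] assms])
    (auto simp: set_positions)

lemma bord_vals_mono:
  assumes "L \<subseteq> L'" "1 \<le> k" "k \<le> length (vals b q \<pi> N L)"
  shows "bord (vals b q \<pi> N L) k \<le> bord (vals b q \<pi> N L') k"
proof -
  let ?xs = "positions \<pi> N L" and ?ys = "positions \<pi> N L'"
  have xs: "?xs = filter (\<lambda>i. \<pi> i \<in> L) ?ys" by (rule positions_filter[OF assms(1)])
  have k: "k \<le> length ?xs" "k \<le> length ?ys"
    using assms(3) order_trans[OF _ length_filter_le[of "\<lambda>i. \<pi> i \<in> L" ?ys]]
    by (auto simp: vals_eq_map_positions positions_filter[OF assms(1)])
  have "?ys ! (k - 1) \<le> ?xs ! (k - 1)"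
    using sorted_wrt_nth_filter[of "(\<le>)" ?ys "k - 1" "\<lambda>i. \<pi> i \<in> L"] k assms(2)
      strict_sorted_imp_sorted[OF sorted_wrt_positions] xs by simp
  then show ?thesis
    using bord_vals k assms(2) b_antimonoD positions_nth_mem by simp
qed

lemma sord_vals_antimono:
  assumes "L \<subseteq> L'" "1 \<le> k" "k \<le> length (vals s q \<pi> N L)"
  shows "sord (vals s q \<pi> N L') k \<le> sord (vals s q \<pi> N L) k"
proof -
  let ?xs = "positions \<pi> N L" and ?ys = "positions \<pi> N L'"
  have rev_xs: "rev ?xs = filter (\<lambda>i. \<pi> i \<in> L) (rev ?ys)"
    by (simp add: positions_filter[OF assms(1)] rev_filter)
  have k: "k \<le> length ?xs" "k \<le> length ?ys"
    using assms(3) order_trans[OF _ length_filter_le[of "\<lambda>i. \<pi> i \<in> L" ?ys]]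
    by (auto simp: vals_eq_map_positions positions_filter[OF assms(1)])
  have "sorted_wrt (\<ge>) (rev ?ys)"
    using strict_sorted_imp_sorted[OF sorted_wrt_positions] by (simp add: sorted_wrt_rev)
  then have "rev ?xs ! (k - 1) \<le> rev ?ys ! (k - 1)"
    using sorted_wrt_nth_filter[of "(\<ge>)" "rev ?ys" "k - 1" "\<lambda>i. \<pi> i \<in> L"] k assms(2)
    unfolding rev_xs[symmetric] by (simp add: reflp_on_def)
  then have "?xs ! (length ?xs - k) \<le> ?ys ! (length ?ys - k)"
    using k assms(2) by (simp add: rev_nth)
  then show ?thesis
    using sord_vals k assms(2) s_antimonoD positions_nth_mem by simp
qed

lemma OPT_minus_STR_le_reduced_pair:
  fixes \<pi> :: "nat \<Rightarrow> agent"
  defines "B \<equiv> vals b q \<pi> N {BO, BN}" and "S \<equiv> vals s q \<pi> N {SO, SN}"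
  shows "OPT_fb b s q \<pi> N - STR_mech b s q \<pi> N
    \<le> (if str_reduces B S then bord B (trade_r B S) - sord S (trade_r B S) else 0)"
proof -
  have "length (positions \<pi> N L) \<le> length (positions \<pi> N L')" if "L \<subseteq> L'" for L L'
    using positions_filter[OF that] by (metis length_filter_le)
  then have "OPT_fb b s q \<pi> N \<le> first_best B S"
    unfolding OPT_fb_def B_def S_def
    by (intro first_best_le_augmented bord_vals_mono sord_vals_antimono) (auto simp: length_vals)
  then show ?thesis
    using first_best_minus_str_gft[of B S] by (simp add: STR_mech_def B_def S_def)
qed

lemma str_reduces_trade_r_bounds:
  fixes \<pi> :: "nat \<Rightarrow> agent" and LB LS :: "agent set"
  defines "r \<equiv> trade_r (vals b q \<pi> N LB) (vals s q \<pi> N LS)"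
  assumes "str_reduces (vals b q \<pi> N LB) (vals s q \<pi> N LS)"
  shows "1 \<le> r" "r \<le> length (positions \<pi> N LB)" "r \<le> length (positions \<pi> N LS)"
  using assms trade_r_le_length[of "vals b q \<pi> N LB" "vals s q \<pi> N LS"]
  by (auto simp: str_reduces_def Let_def length_vals)

text \<open>A reduced trade means that the lowest traded buyer values less than the first excluded
  seller, hence also less than that seller's own buyer value: the buyer sits behind the seller.\<close>

lemma str_reduces_buyer_behind_sellers:
  fixes \<pi> :: "nat \<Rightarrow> agent" and LB LS :: "agent set"
  defines "xB \<equiv> positions \<pi> N LB" and "xS \<equiv> positions \<pi> N LS"
    and "r \<equiv> trade_r (vals b q \<pi> N LB) (vals s q \<pi> N LS)"
  assumes reduces: "str_reduces (vals b q \<pi> N LB) (vals s q \<pi> N LS)" and "r < length xS"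
  shows "length xS - r < xB ! (r - 1)"
proof -
  define \<sigma> where "\<sigma> = xS ! (length xS - (r + 1))"
  note r = str_reduces_trade_r_bounds[OF reduces, folded r_def xB_def]
  have \<sigma>_idx: "length xS - (r + 1) < length xS" using assms(5) by simp
  have "b (q (xB ! (r - 1))) < s (q \<sigma>)"
    using reduces assms(5) r bord_vals[of r \<pi> LB] sord_vals[of "r + 1" \<pi> LS]
    by (auto simp: str_reduces_def Let_def r_def xB_def xS_def \<sigma>_def length_vals)
  also have "\<dots> \<le> b (q \<sigma>)"
    using s_le_b positions_nth_mem \<sigma>_idx by (simp add: \<sigma>_def xS_def)
  finally have "\<sigma> < xB ! (r - 1)"
    using b_antimonoD[of "xB ! (r - 1)" \<sigma>] positions_nth_mem \<sigma>_idx r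
    by (force simp: \<sigma>_def xS_def xB_def)
  moreover have "length xS - r \<le> \<sigma>"
    using positions_nth_bounds(1)[OF \<sigma>_idx[unfolded xS_def]] assms(5)
    by (simp add: \<sigma>_def xS_def)
  ultimately show ?thesis by simp
qed

lemma str_reduces_buyer_late:
  fixes \<pi> :: "nat \<Rightarrow> agent" and n c p :: nat
  defines "xB \<equiv> positions \<pi> N {BO, BN}"
    and "r \<equiv> trade_r (vals b q \<pi> N {BO, BN}) (vals s q \<pi> N {SO, SN})"
  assumes reduces: "str_reduces (vals b q \<pi> N {BO, BN}) (vals s q \<pi> N {SO, SN})"
    and sellers: "length (positions \<pi> N {SO, SN}) = n + c" and "2 * p \<le> n + c + 1"
  shows "p \<le> xB ! (r - 1)"
proof -
  note r = str_reduces_trade_r_bounds[OF reduces, folded r_def xB_def]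
  have "r \<le> xB ! (r - 1)"
    using positions_nth_bounds(1)[of "r - 1"] r by (simp add: xB_def)
  moreover have "n + c - r < xB ! (r - 1)" if "r < n + c"
    using str_reduces_buyer_behind_sellers[OF reduces] that sellers by (simp add: r_def xB_def)
  ultimately show ?thesis using r(3) sellers assms(5) by (cases "r < n + c") auto
qed

lemma str_reduces_late_seller:
  fixes \<pi> :: "nat \<Rightarrow> agent" and n c p :: nat
  defines "xS \<equiv> positions \<pi> N {SO, SN}"
    and "r \<equiv> trade_r (vals b q \<pi> N {BO, BN}) (vals s q \<pi> N {SO, SN})"
  assumes reduces: "str_reduces (vals b q \<pi> N {BO, BN}) (vals s q \<pi> N {SO, SN})"
    and sellers: "length xS = n + c" and "2 * p \<le> n + c + 1"
    and late: "N - p + 1 < xS ! (n + c - r)"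
  shows "few_early_buyers n c p \<pi>"
proof -
  note r = str_reduces_trade_r_bounds[OF reduces, folded r_def xS_def]
  have "xS ! (n + c - r) + (n + c - 1 - (n + c - r)) \<le> N"
    using positions_nth_bounds(2)[of "n + c - r" \<pi> N "{SO, SN}"] r sellers by (simp add: xS_def)
  with late r sellers have "r < p" by linarith
  moreover have "n + c - r < positions \<pi> N {BO, BN} ! (r - 1)"
    using str_reduces_buyer_behind_sellers[OF reduces] \<open>r < p\<close> assms(5) sellers
    by (simp add: r_def xS_def)
  ultimately have "card {i \<in> {1..n + c - p + 1}. \<pi> i \<in> {BO, BN}} \<le> r - 1"
    using card_before_positions_nth[of "r - 1" \<pi> N "{BO, BN}" "n + c - p + 1"] r assms(5)
    by simp
  then show ?thesis using \<open>r < p\<close> by (simp add: few_early_buyers_def)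
qed

lemma reduced_pair_le:
  fixes \<pi> :: "nat \<Rightarrow> agent" and n c p :: nat
  defines "B \<equiv> vals b q \<pi> N {BO, BN}" and "S \<equiv> vals s q \<pi> N {SO, SN}"
  assumes sellers: "length (positions \<pi> N {SO, SN}) = n + c"
    and p: "1 \<le> p" "2 * p \<le> n + c + 1" and reduces: "str_reduces B S"
  shows "bord B (trade_r B S) - sord S (trade_r B S) \<le> b (q p) - s (q (N - p + 1))
    + (if few_early_buyers n c p \<pi> then s (q (N - p + 1)) - s (q N) else 0)"
proof -
  define r where "r = trade_r B S"
  define \<beta> where "\<beta> = positions \<pi> N {BO, BN} ! (r - 1)"
  define \<sigma> where "\<sigma> = positions \<pi> N {SO, SN} ! (n + c - r)"
  note r = str_reduces_trade_r_bounds[OF reduces[unfolded B_def S_def], folded B_def S_def r_def]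
  have "n + c \<le> N" using sellers length_positions_le by metis
  then have pN: "p \<in> {1..N}" "N - p + 1 \<in> {1..N}" "N \<in> {1..N}" using p by auto
  have \<beta>: "\<beta> \<in> {1..N}" "p \<le> \<beta>"
    using positions_nth_mem r str_reduces_buyer_late[OF reduces[unfolded B_def S_def] sellers p(2)]
    by (auto simp: \<beta>_def r_def B_def S_def)
  have \<sigma>: "\<sigma> \<in> {1..N}" using positions_nth_mem r sellers by (auto simp: \<sigma>_def)
  have "bord B r - sord S r = b (q \<beta>) - s (q \<sigma>)"
    using bord_vals[of r \<pi> "{BO, BN}"] sord_vals[of r \<pi> "{SO, SN}"] r sellers
    by (simp add: B_def S_def \<beta>_def \<sigma>_def)
  moreover have "b (q \<beta>) \<le> b (q p)" using b_antimonoD pN(1) \<beta> by blast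
  moreover have "s (q (N - p + 1)) - s (q \<sigma>) \<le>
      (if few_early_buyers n c p \<pi> then s (q (N - p + 1)) - s (q N) else 0)"
  proof (cases "\<sigma> \<le> N - p + 1")
    case True
    then show ?thesis using s_antimonoD[OF \<sigma> pN(2)] s_antimonoD[OF pN(2,3)] pN(2) by auto
  next
    case False
    then have "few_early_buyers n c p \<pi>"
      using str_reduces_late_seller[OF reduces[unfolded B_def S_def] sellers p(2)]
      by (simp add: \<sigma>_def r_def B_def S_def)
    then show ?thesis using s_antimonoD[OF \<sigma> pN(3)] \<sigma> by simp
  qed
  ultimately show ?thesis unfolding r_def by linarith
qed

lemma OPT_minus_STR_le:
  assumes \<pi>: "\<pi> \<in> Pi_nmc n m c" and N: "N = m + n + 2 * c"
    and p: "1 \<le> p" "2 * p \<le> n + c + 1"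
  shows "OPT_fb b s q \<pi> N - STR_mech b s q \<pi> N \<le> b (q p) - s (q (N - p + 1))
    + (if few_early_buyers n c p \<pi> then s (q (N - p + 1)) - s (q N) else 0)"
proof -
  have sellers: "length (positions \<pi> N {SO, SN}) = n + c"
    using card_sellers_Pi_nmc[OF \<pi>] by (simp add: length_positions N)
  have pN: "p \<in> {1..N}" "N - p + 1 \<in> {1..N}" "N \<in> {1..N}" "p \<le> N - p + 1"
    using p N by auto
  have "0 \<le> b (q p) - s (q (N - p + 1))"
    using s_le_b[OF pN(1)] s_antimonoD[OF pN(1,2,4)] by simp
  moreover have "0 \<le> (if few_early_buyers n c p \<pi> then s (q (N - p + 1)) - s (q N) else 0)"
    using s_antimonoD[OF pN(2,3)] pN(2) by auto
  ultimately show ?thesis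
    using OPT_minus_STR_le_reduced_pair[of \<pi>] reduced_pair_le[OF sellers p] by (auto split: if_splits)
qed

lemma extreme_windows_mean_ge:
  assumes p: "1 \<le> p" "p \<le> N"
  shows "b (q p) - s (q (N - p + 1)) + (s (q (N - p + 1)) - s (q N)) / p
    \<le> (\<Sum>i\<in>{1..p}. \<Sum>j\<in>{N - p + 1..N}. b (q i) - s (q j)) / (real p * real p)"
proof -
  let ?I = "{1..p}" and ?J = "{N - p + 1..N}"
  have card: "card ?I = p" "card ?J = p" using p by auto
  have sum_b: "real p * b (q p) \<le> (\<Sum>i\<in>?I. b (q i))"
  proof -
    have "(\<Sum>i\<in>?I. b (q p)) \<le> (\<Sum>i\<in>?I. b (q i))"
      by (rule sum_mono) (use b_antimonoD p in auto)
    then show ?thesis using card by simp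
  qed
  have sum_s: "(\<Sum>j\<in>?J. s (q j)) \<le> (real p - 1) * s (q (N - p + 1)) + s (q N)"
  proof -
    have N: "N \<in> ?J" using p by simp
    have "(\<Sum>j\<in>?J - {N}. s (q j)) \<le> (\<Sum>j\<in>?J - {N}. s (q (N - p + 1)))"
      by (rule sum_mono) (use s_antimonoD p in auto)
    also have "\<dots> = (real p - 1) * s (q (N - p + 1))" using card N p by simp
    finally show ?thesis using sum.remove[OF _ N, of "\<lambda>j. s (q j)"] by simp
  qed
  have "(\<Sum>i\<in>?I. \<Sum>j\<in>?J. b (q i) - s (q j))
      = (\<Sum>i\<in>?I. real p * b (q i) - (\<Sum>j\<in>?J. s (q j)))"
    using card by (simp add: sum_subtractf)
  also have "\<dots> = real p * ((\<Sum>i\<in>?I. b (q i)) - (\<Sum>j\<in>?J. s (q j)))"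
    using card by (simp add: sum_subtractf sum_distrib_left right_diff_distrib)
  finally have double: "(\<Sum>i\<in>?I. \<Sum>j\<in>?J. b (q i) - s (q j))
      = real p * ((\<Sum>i\<in>?I. b (q i)) - (\<Sum>j\<in>?J. s (q j)))" .
  have "real p * real p * (b (q p) - s (q (N - p + 1)) + (s (q (N - p + 1)) - s (q N)) / p)
      = real p * (real p * b (q p) - ((real p - 1) * s (q (N - p + 1)) + s (q N)))"
    using p by (simp add: field_simps)
  also have "\<dots> \<le> real p * ((\<Sum>i\<in>?I. b (q i)) - (\<Sum>j\<in>?J. s (q j)))"
    using sum_b sum_s by (intro mult_left_mono) auto
  finally show ?thesis
    unfolding double using p by (simp add: field_simps)
qed

end

section \<open>Relabelling by shifted swaps\<close>

lemma comp_permutes_Pi_nmc: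
  assumes \<tau>: "\<tau> permutes {1..m + n + 2 * c}" and \<pi>: "\<pi> \<in> Pi_nmc n m c"
  shows "\<pi> \<circ> \<tau> \<in> Pi_nmc n m c"
proof -
  let ?I = "{1..m + n + 2 * c}"
  have "card {i \<in> ?I. (\<pi> \<circ> \<tau>) i = a} = card {i \<in> ?I. \<pi> i = a}" for a
  proof -
    have "\<tau> ` {i \<in> ?I. \<pi> (\<tau> i) = a} = {j \<in> \<tau> ` ?I. \<pi> j = a}" by auto
    also have "\<dots> = {j \<in> ?I. \<pi> j = a}" by (simp only: permutes_image[OF \<tau>])
    finally have image: "\<tau> ` {i \<in> ?I. \<pi> (\<tau> i) = a} = {j \<in> ?I. \<pi> j = a}" .
    have "card {i \<in> ?I. (\<pi> \<circ> \<tau>) i = a} = card (\<tau> ` {i \<in> ?I. \<pi> (\<tau> i) = a})"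
      using permutes_inj[OF \<tau>] by (simp add: card_image inj_on_subset)
    then show ?thesis by (simp only: image)
  qed
  moreover have "\<pi> \<circ> \<tau> \<in> ?I \<rightarrow>\<^sub>E UNIV"
    using \<pi> permutes_not_in[OF \<tau>] by (auto simp: Pi_nmc_def PiE_def extensional_def)
  ultimately show ?thesis using \<pi> by (simp add: Pi_nmc_def)
qed

lemma E1_cong:
  fixes n m c :: nat
  defines "N \<equiv> m + n + 2 * c" and "p \<equiv> nat \<lceil>real n / 10\<rceil>"
  assumes outer: "\<And>i. i \<le> 2 * p \<or> N - 2 * p < i \<Longrightarrow> \<pi>' i = \<pi> i"
    and "\<pi> \<in> Pi_nmc n m c" "\<pi>' \<in> Pi_nmc n m c"
  shows "\<pi>' \<in> E1 n m c \<longleftrightarrow> \<pi> \<in> E1 n m c"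
proof -
  have window: "W \<inter> {i. \<pi>' i = a} = W \<inter> {i. \<pi> i = a}"
    if "W \<subseteq> {..2 * p} \<union> {N - 2 * p<..}" for W a
  proof -
    have "\<pi>' i = \<pi> i" if "i \<in> W" for i using outer \<open>W \<subseteq> _\<close> that by blast
    then show ?thesis by auto
  qed
  have "{1..p} \<inter> {i. \<pi>' i = BN} = {1..p} \<inter> {i. \<pi> i = BN}"
    "{p + 1..2 * p} \<inter> {i. \<pi>' i = BO} = {p + 1..2 * p} \<inter> {i. \<pi> i = BO}"
    "{N - p + 1..N} \<inter> {i. \<pi>' i = SN} = {N - p + 1..N} \<inter> {i. \<pi> i = SN}"
    "{N - 2 * p + 1..N - p} \<inter> {i. \<pi>' i = SO} = {N - 2 * p + 1..N - p} \<inter> {i. \<pi> i = SO}"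
    by (intro window; auto)+
  then show ?thesis using assms(4,5) by (simp add: E1_def Let_def N_def p_def)
qed

lemma comp_permutes_E2:
  fixes n m c :: nat
  defines "N \<equiv> m + n + 2 * c" and "p \<equiv> nat \<lceil>real n / 10\<rceil>"
  assumes \<tau>: "\<tau> permutes M" and M: "M \<subseteq> {2 * p + 1..2 * n + 2 * c}" "M \<subseteq> {..N - 2 * p}"
    and \<pi>: "\<pi> \<in> E2 n m c"
  shows "\<pi> \<circ> \<tau> \<in> E2 n m c"
proof -
  have \<pi>_Pi: "\<pi> \<in> Pi_nmc n m c" using \<pi> by (simp add: E2_def)
  have "M \<subseteq> {1..N}"
  proof
    fix i assume "i \<in> M"
    with M show "i \<in> {1..N}" by auto
  qed
  then have Pi: "\<pi> \<circ> \<tau> \<in> Pi_nmc n m c"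
    using comp_permutes_Pi_nmc[OF permutes_subset[OF \<tau>] \<pi>_Pi] by (simp add: N_def)
  have "\<tau> i = i" if "i \<le> 2 * p \<or> N - 2 * p < i" for i
  proof -
    have "i \<notin> M"
    proof
      assume "i \<in> M"
      with M have "2 * p + 1 \<le> i" "i \<le> N - 2 * p" by auto
      with that show False by linarith
    qed
    then show ?thesis using permutes_not_in[OF \<tau>] by simp
  qed
  then have "\<pi> \<circ> \<tau> \<notin> E1 n m c"
    using E1_cong[of n m c "\<pi> \<circ> \<tau>" \<pi>, OF _ \<pi>_Pi Pi] \<pi> by (simp add: E2_def N_def p_def)
  moreover have "{i \<in> {1..N}. (\<pi> \<circ> \<tau>) i = SN} \<subseteq> {1..2 * n + 2 * c}"
  proof
    fix i assume i: "i \<in> {i \<in> {1..N}. (\<pi> \<circ> \<tau>) i = SN}"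
    show "i \<in> {1..2 * n + 2 * c}"
    proof (cases "i \<in> M")
      case False
      then show ?thesis using i \<pi> permutes_not_in[OF \<tau>] by (auto simp: E2_def N_def)
    qed (use i M in auto)
  qed
  ultimately show ?thesis using Pi by (simp add: E2_def N_def)
qed

definition swap_shift :: "nat set \<Rightarrow> nat \<Rightarrow> nat \<Rightarrow> nat" where
  "swap_shift S d i = (if i \<in> S then i + d else if d \<le> i \<and> i - d \<in> S then i - d else i)"

lemma swap_shift_involution:
  assumes "\<And>a. a \<in> S \<Longrightarrow> a + d \<notin> S"
  shows "swap_shift S d (swap_shift S d i) = i"
  using assms by (auto simp: swap_shift_def)

lemma swap_shift_permutes:
  assumes "\<And>a. a \<in> S \<Longrightarrow> a + d \<notin> S"
  shows "swap_shift S d permutes (S \<union> (\<lambda>a. a + d) ` S)"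
  unfolding permutes_def
proof (intro conjI allI impI)
  fix i assume i: "i \<notin> S \<union> (\<lambda>a. a + d) ` S"
  have "\<not> (d \<le> i \<and> i - d \<in> S)"
  proof
    assume "d \<le> i \<and> i - d \<in> S"
    then have "i \<in> (\<lambda>a. a + d) ` S" by (metis image_eqI le_add_diff_inverse2)
    with i show False by simp
  qed
  with i show "swap_shift S d i = i" unfolding swap_shift_def by auto
next
  fix j
  have "swap_shift S d (swap_shift S d j) = j" "i = swap_shift S d j" if "swap_shift S d i = j" for i
    using swap_shift_involution[OF assms] that by auto
  then show "\<exists>!i. swap_shift S d i = j"
    using swap_shift_involution[OF assms] by blast
qed

lemma swap_shift_eq:
  assumes "S \<subseteq> A" "a \<in> A" "\<And>a'. a' \<in> A \<Longrightarrow> a' + d \<notin> A"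
  shows "swap_shift S d a = (if a \<in> S then a + d else a)"
proof -
  have "\<not> (d \<le> a \<and> a - d \<in> S)"
  proof
    assume "d \<le> a \<and> a - d \<in> S"
    then have "a - d \<in> A" "a - d + d = a" using assms(1) by auto
    with assms(2,3) show False by metis
  qed
  then show ?thesis unfolding swap_shift_def by auto
qed

section \<open>Counting labellings with few early buyers\<close>

lemma card_filter_le_by_averaging:
  fixes f :: "'g \<Rightarrow> 'a \<Rightarrow> 'a"
  assumes E: "finite E" and G: "finite G" "G \<noteq> {}"
    and bij: "\<And>g. g \<in> G \<Longrightarrow> bij_betw (f g) E E"
    and few: "\<And>x. x \<in> E \<Longrightarrow> k * card {g \<in> G. P (f g x)} \<le> card G"
  shows "k * card {x \<in> E. P x} \<le> card E"
proof -
  have shifted: "card {x \<in> E. P (f g x)} = card {x \<in> E. P x}" if "g \<in> G" for g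
  proof -
    have "f g ` {x \<in> E. P (f g x)} = {y \<in> f g ` E. P y}" by auto
    then have "bij_betw (f g) {x \<in> E. P (f g x)} {y \<in> E. P y}"
      using bij[OF that] by (auto simp: bij_betw_def inj_on_subset)
    then show ?thesis by (rule bij_betw_same_card)
  qed
  have "(\<Sum>g\<in>G. card {x \<in> E. P (f g x)}) = (\<Sum>g\<in>G. \<Sum>x\<in>E. of_bool (P (f g x)))"
    using E by (simp add: Collect_conj_eq Int_commute)
  also have "\<dots> = (\<Sum>x\<in>E. \<Sum>g\<in>G. of_bool (P (f g x)))" by (rule sum.swap)
  also have "\<dots> = (\<Sum>x\<in>E. card {g \<in> G. P (f g x)})"
    using G by (simp add: Collect_conj_eq Int_commute)
  finally have double: "card G * card {x \<in> E. P x} = (\<Sum>x\<in>E. card {g \<in> G. P (f g x)})"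
    using shifted by simp
  have "card G * (k * card {x \<in> E. P x}) = (\<Sum>x\<in>E. k * card {g \<in> G. P (f g x)})"
    by (simp add: double sum_distrib_left mult.left_commute)
  also have "\<dots> \<le> (\<Sum>x\<in>E. card G)" by (rule sum_mono) (rule few)
  also have "\<dots> = card G * card E" by simp
  finally show ?thesis using G by (simp add: card_gt_0_iff)
qed

lemma card_subsets_inter_le:
  assumes "finite A" "Y \<subseteq> A"
  shows "card {T. T \<subseteq> A \<and> card (T \<inter> Y) \<le> J} = (\<Sum>j\<le>J. card Y choose j) * 2 ^ (card A - card Y)"
proof -
  have "bij_betw (\<lambda>T. (T \<inter> Y, T - Y)) {T. T \<subseteq> A \<and> card (T \<inter> Y) \<le> J}
      ({U. U \<subseteq> Y \<and> card U \<le> J} \<times> Pow (A - Y))"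
  proof (rule bij_betwI[where g = "\<lambda>(U, V). U \<union> V"])
    show "(\<lambda>(U, V). U \<union> V) \<in> {U. U \<subseteq> Y \<and> card U \<le> J} \<times> Pow (A - Y)
        \<rightarrow> {T. T \<subseteq> A \<and> card (T \<inter> Y) \<le> J}"
    proof
      fix z assume "z \<in> {U. U \<subseteq> Y \<and> card U \<le> J} \<times> Pow (A - Y)"
      then obtain U V where "z = (U, V)" "U \<subseteq> Y" "card U \<le> J" "V \<subseteq> A - Y" by auto
      moreover have "(U \<union> V) \<inter> Y = U" using calculation by auto
      ultimately show "(\<lambda>(U, V). U \<union> V) z \<in> {T. T \<subseteq> A \<and> card (T \<inter> Y) \<le> J}"
        using assms(2) by auto
    qed
  qed auto
  then have "card {T. T \<subseteq> A \<and> card (T \<inter> Y) \<le> J}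
      = card {U. U \<subseteq> Y \<and> card U \<le> J} * card (Pow (A - Y))"
    by (simp add: bij_betw_same_card card_cartesian_product)
  moreover have "{U. U \<subseteq> Y \<and> card U \<le> J} = (\<Union>j\<le>J. {U. U \<subseteq> Y \<and> card U = j})" by auto
  moreover have "card (\<Union>j\<le>J. {U. U \<subseteq> Y \<and> card U = j}) = (\<Sum>j\<le>J. card Y choose j)"
    using finite_subset[OF assms(2,1)]
    by (subst card_UN_disjoint) (auto simp: n_subsets intro: finite_subset[of _ "Pow Y"])
  ultimately show ?thesis
    using assms by (simp add: card_Pow card_Diff_subset finite_subset)
qed

lemma card_subsets_sym_diff_inter_le:
  assumes "finite A" "Z \<subseteq> A" "Y \<subseteq> A"
  shows "card {S. S \<subseteq> A \<and> card (sym_diff S Z \<inter> Y) \<le> J}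
    = (\<Sum>j\<le>J. card Y choose j) * 2 ^ (card A - card Y)"
proof -
  have "bij_betw (\<lambda>S. sym_diff S Z) {S. S \<subseteq> A \<and> card (sym_diff S Z \<inter> Y) \<le> J}
      {T. T \<subseteq> A \<and> card (T \<inter> Y) \<le> J}"
  proof (rule bij_betwI[where g = "\<lambda>T. sym_diff T Z"])
    have involution: "sym_diff (sym_diff T Z) Z = T" for T by blast
    then show "sym_diff (sym_diff S Z) Z = S" "sym_diff (sym_diff T Z) Z = T" for S T by simp_all
    show "(\<lambda>S. sym_diff S Z) \<in> {S. S \<subseteq> A \<and> card (sym_diff S Z \<inter> Y) \<le> J}
        \<rightarrow> {T. T \<subseteq> A \<and> card (T \<inter> Y) \<le> J}"
      unfolding Pi_def mem_Collect_eq using assms(2) by blast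
    show "(\<lambda>T. sym_diff T Z) \<in> {T. T \<subseteq> A \<and> card (T \<inter> Y) \<le> J}
        \<rightarrow> {S. S \<subseteq> A \<and> card (sym_diff S Z \<inter> Y) \<le> J}"
    proof
      fix T assume "T \<in> {T. T \<subseteq> A \<and> card (T \<inter> Y) \<le> J}"
      then show "sym_diff T Z \<in> {S. S \<subseteq> A \<and> card (sym_diff S Z \<inter> Y) \<le> J}"
        unfolding mem_Collect_eq involution using assms(2) by blast
    qed
  qed
  from bij_betw_same_card[OF this] show ?thesis
    by (simp only: card_subsets_inter_le[OF assms(1,3)])
qed

lemma linear_times_pow2_le_pow3:
  assumes "4 * J + 2 * x + 2 \<le> k"
  shows "(J + x + 2) * 2 ^ k \<le> (3::nat) ^ (k - J)"
proof -
  have base: "(x + 2) * 4 ^ (x + 1) \<le> (9::nat) ^ (x + 1)" for x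
  proof (induction x)
    case (Suc x)
    have "(Suc x + 2) * 4 ^ (Suc x + 1) = 4 * (x + 3) * 4 ^ (x + 1)" by (simp add: algebra_simps)
    also have "\<dots> \<le> 9 * (x + 2) * 4 ^ (x + 1)" by (intro mult_right_mono) auto
    also have "\<dots> \<le> 9 * 9 ^ (x + 1)" using mult_left_mono[OF Suc.IH, of 9] by (simp only: mult.assoc)
    finally show ?case by simp
  qed simp
  have bound: "(J + x + 2) * (16 ^ J * 4 ^ (x + 1)) \<le> (27::nat) ^ J * 9 ^ (x + 1)" for J
  proof (induction J)
    case (Suc J)
    have "(Suc J + x + 2) * (16 ^ Suc J * 4 ^ (x + 1)) = 16 * (J + x + 3) * (16 ^ J * 4 ^ (x + 1))"
      by (simp add: algebra_simps)
    also have "\<dots> \<le> 27 * (J + x + 2) * (16 ^ J * 4 ^ (x + 1))" by (intro mult_right_mono) auto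
    also have "\<dots> \<le> 27 * (27 ^ J * 9 ^ (x + 1))"
      using mult_left_mono[OF Suc.IH, of 27] by (simp only: mult.assoc)
    finally show ?case by simp
  qed (use base in simp)
  obtain t where k: "k = 4 * J + 2 * x + 2 + t" using assms le_Suc_ex by blast
  have pow2: "(2::nat) ^ k = 16 ^ J * 4 ^ (x + 1) * 2 ^ t"
    unfolding k power_add power_mult by simp
  have pow3: "(3::nat) ^ (k - J) = 27 ^ J * 9 ^ (x + 1) * 3 ^ t"
    unfolding k add_diff_assoc2[of J] by (simp add: power_add power_mult)
  have "(J + x + 2) * 2 ^ k = (J + x + 2) * (16 ^ J * 4 ^ (x + 1)) * 2 ^ t"
    by (simp only: pow2 mult.assoc)
  also have "\<dots> \<le> 27 ^ J * 9 ^ (x + 1) * 3 ^ t"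
    by (rule mult_mono[OF bound]) (simp_all add: power_mono)
  also have "\<dots> = 3 ^ (k - J)" by (simp only: pow3)
  finally show ?thesis .
qed

lemma pow3_times_sum_binomial_le:
  assumes "J \<le> k"
  shows "3 ^ (k - J) * (\<Sum>j\<le>J. k choose j) \<le> (4::nat) ^ k"
proof -
  have "3 ^ (k - J) * (\<Sum>j\<le>J. k choose j) = (\<Sum>j\<le>J. (k choose j) * 3 ^ (k - J))"
    by (simp add: sum_distrib_right mult.commute)
  also have "\<dots> \<le> (\<Sum>j\<le>J. (k choose j) * 3 ^ (k - j))"
    by (intro sum_mono mult_left_mono power_increasing) auto
  also have "\<dots> \<le> (\<Sum>j\<le>k. (k choose j) * 3 ^ (k - j))"
    by (intro sum_mono2) (use assms in auto)
  also have "\<dots> = (1 + 3) ^ k" using binomial_ring[of "1::nat" 3 k] by simp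
  finally show ?thesis by simp
qed

lemma sum_binomial_lower_tail_le:
  assumes "4 * J + 2 * x + 2 \<le> k"
  shows "(J + x + 2) * (\<Sum>j\<le>J. k choose j) \<le> 2 ^ k"
proof -
  have "3 ^ (k - J) * ((J + x + 2) * (\<Sum>j\<le>J. k choose j))
      = (J + x + 2) * (3 ^ (k - J) * (\<Sum>j\<le>J. k choose j))" by (simp only: mult_ac)
  also have "\<dots> \<le> (J + x + 2) * 4 ^ k"
    using pow3_times_sum_binomial_le[of J k] assms by (intro mult_left_mono) auto
  also have "\<dots> = (J + x + 2) * 2 ^ k * 2 ^ k"
    by (simp only: mult.assoc flip: power_mult_distrib) simp
  also have "\<dots> \<le> 3 ^ (k - J) * 2 ^ k"
    using linear_times_pow2_le_pow3[OF assms] by simp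
  finally show ?thesis by simp
qed

lemma card_swapped_pairs:
  fixes P :: "'a \<Rightarrow> bool"
  assumes "finite A" "S \<subseteq> A"
  shows "card {a \<in> A. P (if a \<in> S then f a else a)}
    = card {a \<in> A. P a \<and> P (f a)} + card (sym_diff S {a \<in> A. P a \<and> \<not> P (f a)} \<inter> {a \<in> A. P a \<noteq> P (f a)})"
proof -
  have "{a \<in> A. P (if a \<in> S then f a else a)}
      = {a \<in> A. P a \<and> P (f a)} \<union> (sym_diff S {a \<in> A. P a \<and> \<not> P (f a)} \<inter> {a \<in> A. P a \<noteq> P (f a)})"
    using assms(2) by auto
  then show ?thesis using assms(1) by (simp add: card_Un_disjoint disjoint_iff)
qed

lemma card_filter_le_pairs:
  fixes P :: "'a \<Rightarrow> bool"
  assumes I: "finite I" "A \<subseteq> I" "f ` A \<subseteq> I" and f: "inj_on f A" "A \<inter> f ` A = {}"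
  shows "card {i \<in> I. P i} + 2 * card A
    \<le> 2 * card {a \<in> A. P a \<and> P (f a)} + card {a \<in> A. P a \<noteq> P (f a)} + card I"
proof -
  have A: "finite A" using I finite_subset by blast
  have "card {i \<in> I. P i} \<le> card ({a \<in> A. P a} \<union> f ` {a \<in> A. P (f a)} \<union> (I - (A \<union> f ` A)))"
    using I A by (intro card_mono) auto
  also have "\<dots> \<le> card {a \<in> A. P a} + card (f ` {a \<in> A. P (f a)}) + card (I - (A \<union> f ` A))"
    by (meson card_Un_le add_le_mono order_trans le_refl)
  finally have split: "card {i \<in> I. P i}
      \<le> card {a \<in> A. P a} + card (f ` {a \<in> A. P (f a)}) + card (I - (A \<union> f ` A))" .
  have "card (f ` {a \<in> A. P (f a)}) = card {a \<in> A. P (f a)}"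
    using f(1) by (simp add: card_image inj_on_subset)
  moreover have "card {a \<in> A. P a} + card {a \<in> A. P (f a)}
      = 2 * card {a \<in> A. P a \<and> P (f a)} + card {a \<in> A. P a \<noteq> P (f a)}"
  proof -
    have "(\<Sum>a\<in>A. of_bool (P a) + of_bool (P (f a)) :: nat)
        = (\<Sum>a\<in>A. 2 * of_bool (P a \<and> P (f a)) + of_bool (P a \<noteq> P (f a)))"
      by (intro sum.cong) auto
    then show ?thesis
      using A by (simp add: sum.distrib sum_distrib_left Collect_conj_eq Int_commute)
  qed
  moreover have "card (I - (A \<union> f ` A)) + 2 * card A = card I"
  proof -
    have "card (A \<union> f ` A) = 2 * card A"
      using A f by (simp add: card_Un_disjoint card_image)
    then show ?thesis
      using I A card_mono[OF I(1), of "A \<union> f ` A"] by (simp add: card_Diff_subset)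
  qed
  ultimately show ?thesis using split by linarith
qed

lemma card_subsets_few_sym_diff_inter:
  assumes "finite A" "Z \<subseteq> A" "Y \<subseteq> A" "2 \<le> p" "4 * p \<le> card Y + 2 * x + 6"
  shows "p * card {S. S \<subseteq> A \<and> x + card (sym_diff S Z \<inter> Y) \<le> p - 2} \<le> 2 ^ card A"
proof (cases "x \<le> p - 2")
  case True
  define J where "J = p - 2 - x"
  have p: "p = J + x + 2" using True assms(4) by (simp add: J_def)
  have "{S. S \<subseteq> A \<and> x + card (sym_diff S Z \<inter> Y) \<le> p - 2}
      = {S. S \<subseteq> A \<and> card (sym_diff S Z \<inter> Y) \<le> J}"
    using True by (auto simp: J_def)
  then have "p * card {S. S \<subseteq> A \<and> x + card (sym_diff S Z \<inter> Y) \<le> p - 2}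
      = p * (\<Sum>j\<le>J. card Y choose j) * 2 ^ (card A - card Y)"
    by (simp add: card_subsets_sym_diff_inter_le[OF assms(1-3)] mult.assoc)
  also have "\<dots> \<le> 2 ^ card Y * 2 ^ (card A - card Y)"
    using sum_binomial_lower_tail_le[of J x "card Y"] assms(5) unfolding p
    by (intro mult_right_mono) auto
  also have "\<dots> = 2 ^ card A"
    using card_mono[OF assms(1,3)] by (simp flip: power_add)
  finally show ?thesis by simp
next
  case False
  then have "{S. S \<subseteq> A \<and> x + card (sym_diff S Z \<inter> Y) \<le> p - 2} = {}" by auto
  then show ?thesis by (simp only: card.empty mult_0_right zero_le)
qed

lemma card_swaps_few_early_buyers:
  fixes n m c p :: nat
  defines "d \<equiv> n + c - 3 * p + 1" and "A \<equiv> {2 * p + 1..n + c - p + 1}"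
  assumes \<pi>: "\<pi> \<in> Pi_nmc n m c" and "n \<le> m" "1 \<le> c" "2 \<le> p" "10 * p \<le> n + 9"
  shows "p * card {S. S \<subseteq> A \<and> few_early_buyers n c p (\<pi> \<circ> swap_shift S d)} \<le> 2 ^ d"
proof -
  define P where "P i \<longleftrightarrow> \<pi> i \<in> {BO, BN}" for i
  define X where "X = {a \<in> A. P a \<and> P (a + d)}"
  define Z where "Z = {a \<in> A. P a \<and> \<not> P (a + d)}"
  define Y where "Y = {a \<in> A. P a \<noteq> P (a + d)}"
  have d: "d + 3 * p = n + c + 1" "card A = d"
    using assms(6,7) by (simp_all add: d_def A_def)
  have A_shift: "a + d \<notin> A" if "a \<in> A" for a using that d by (auto simp: A_def)
  have early: "card X + card (sym_diff S Z \<inter> Y)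
      \<le> card {i \<in> {1..n + c - p + 1}. (\<pi> \<circ> swap_shift S d) i \<in> {BO, BN}}" if S: "S \<subseteq> A" for S
  proof -
    have "card X + card (sym_diff S Z \<inter> Y) = card {a \<in> A. P (if a \<in> S then a + d else a)}"
      using card_swapped_pairs[of A S P "\<lambda>a. a + d"] S by (simp add: X_def Y_def Z_def A_def)
    also have "\<dots> = card {a \<in> A. (\<pi> \<circ> swap_shift S d) a \<in> {BO, BN}}"
    proof -
      have "(\<pi> \<circ> swap_shift S d) a \<in> {BO, BN} \<longleftrightarrow> P (if a \<in> S then a + d else a)" if "a \<in> A" for a
        using swap_shift_eq[OF S that A_shift] by (simp add: P_def)
      then show ?thesis by (intro arg_cong[where f = card]) blast
    qed
    also have "\<dots> \<le> card {i \<in> {1..n + c - p + 1}. (\<pi> \<circ> swap_shift S d) i \<in> {BO, BN}}"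
      by (intro card_mono) (auto simp: A_def)
    finally show ?thesis .
  qed
  have "card {i \<in> {1..m + n + 2 * c}. P i} + 2 * card A
      \<le> 2 * card X + card Y + card {1..m + n + 2 * c}"
    unfolding X_def Y_def
    by (rule card_filter_le_pairs) (use d \<open>n \<le> m\<close> \<open>2 \<le> p\<close> in \<open>auto simp: A_def\<close>)
  then have "4 * p \<le> card Y + 2 * card X + 6"
    using card_buyers_Pi_nmc[OF \<pi>] d assms(5,7) by (simp add: P_def)
  moreover have "finite A" "Z \<subseteq> A" "Y \<subseteq> A" by (auto simp: A_def Z_def Y_def)
  ultimately have "p * card {S. S \<subseteq> A \<and> card X + card (sym_diff S Z \<inter> Y) \<le> p - 2} \<le> 2 ^ d"
    using card_subsets_few_sym_diff_inter[of A Z Y p "card X"] d(2) \<open>2 \<le> p\<close> by simp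
  moreover have "{S. S \<subseteq> A \<and> few_early_buyers n c p (\<pi> \<circ> swap_shift S d)}
      \<subseteq> {S. S \<subseteq> A \<and> card X + card (sym_diff S Z \<inter> Y) \<le> p - 2}"
    using early by (auto simp: few_early_buyers_def intro: order_trans)
  moreover have "finite {S. S \<subseteq> A \<and> card X + card (sym_diff S Z \<inter> Y) \<le> p - 2}"
    by (rule finite_subset[of _ "Pow A"]) (auto simp: A_def)
  ultimately show ?thesis by (meson card_mono le_trans mult_le_mono2)
qed

lemma finite_E2: "finite (E2 n m c)"
proof -
  have "E2 n m c \<subseteq> {1..m + n + 2 * c} \<rightarrow>\<^sub>E (UNIV :: agent set)"
    by (auto simp: E2_def Pi_nmc_def)
  moreover have "(UNIV :: agent set) = {BO, BN, SO, SN}" using agent.exhaust by auto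
  then have "finite (UNIV :: agent set)" by (metis finite.emptyI finite_insert)
  then have "finite ({1..m + n + 2 * c} \<rightarrow>\<^sub>E (UNIV :: agent set))"
    by (intro finite_PiE) simp_all
  ultimately show ?thesis by (rule finite_subset)
qed

lemma ceiling_tenth_bounds:
  assumes "20 \<le> n"
  shows "2 \<le> nat \<lceil>real n / 10\<rceil>" "10 * nat \<lceil>real n / 10\<rceil> \<le> n + 9"
proof -
  have "real n / 10 \<le> of_int \<lceil>real n / 10\<rceil>" "of_int \<lceil>real n / 10\<rceil> < real n / 10 + 1"
    by linarith+
  then show "2 \<le> nat \<lceil>real n / 10\<rceil>" "10 * nat \<lceil>real n / 10\<rceil> \<le> n + 9"
    using assms by linarith+
qed

lemma swap_shift_bij_E2:
  fixes n m c :: nat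
  defines "p \<equiv> nat \<lceil>real n / 10\<rceil>"
  defines "d \<equiv> n + c - 3 * p + 1" and "A \<equiv> {2 * p + 1..n + c - p + 1}"
  assumes "20 \<le> n" "n \<le> m" and S: "S \<subseteq> A"
  shows "bij_betw (\<lambda>\<pi>. \<pi> \<circ> swap_shift S d) (E2 n m c) (E2 n m c)"
proof -
  have p: "2 \<le> p" "10 * p \<le> n + 9" using ceiling_tenth_bounds[OF assms(4)] by (simp_all add: p_def)
  then have d: "d + 3 * p = n + c + 1" by (simp add: d_def)
  then have "a + d \<notin> A" if "a \<in> A" for a using that by (auto simp: A_def)
  then have shift: "a + d \<notin> S" if "a \<in> S" for a using that S by blast
  have "S \<union> (\<lambda>a. a + d) ` S \<subseteq> A \<union> (\<lambda>a. a + d) ` A" using S by blast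
  with swap_shift_permutes[OF shift] have perm: "swap_shift S d permutes (A \<union> (\<lambda>a. a + d) ` A)"
    by (rule permutes_subset)
  have "A \<union> (\<lambda>a. a + d) ` A \<subseteq> {2 * p + 1..2 * n + 2 * c} \<inter> {..m + n + 2 * c - 2 * p}"
  proof
    fix i assume "i \<in> A \<union> (\<lambda>a. a + d) ` A"
    then consider "i \<in> A" | a where "a \<in> A" "i = a + d" by blast
    then show "i \<in> {2 * p + 1..2 * n + 2 * c} \<inter> {..m + n + 2 * c - 2 * p}"
      using d p \<open>n \<le> m\<close> by cases (auto simp: A_def)
  qed
  then have "A \<union> (\<lambda>a. a + d) ` A \<subseteq> {2 * p + 1..2 * n + 2 * c}"
    "A \<union> (\<lambda>a. a + d) ` A \<subseteq> {..m + n + 2 * c - 2 * p}" by auto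
  from this[unfolded p_def] have "(\<lambda>\<pi>. \<pi> \<circ> swap_shift S d) \<in> E2 n m c \<rightarrow> E2 n m c"
    using comp_permutes_E2[OF perm] by blast
  moreover have "(\<pi> \<circ> swap_shift S d) \<circ> swap_shift S d = \<pi>" for \<pi> :: "nat \<Rightarrow> agent"
    using swap_shift_involution[OF shift] by (simp add: fun_eq_iff)
  ultimately show ?thesis by (intro bij_betwI) auto
qed

lemma card_few_early_buyers_E2:
  fixes n m c :: nat
  defines "p \<equiv> nat \<lceil>real n / 10\<rceil>"
  assumes "20 \<le> n" "n \<le> m" "1 \<le> c"
  shows "p * card {\<pi> \<in> E2 n m c. few_early_buyers n c p \<pi>} \<le> card (E2 n m c)"
proof -
  have p: "2 \<le> p" "10 * p \<le> n + 9" using ceiling_tenth_bounds[OF assms(2)] by (simp_all add: p_def)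
  define d where "d = n + c - 3 * p + 1"
  define A where "A = {2 * p + 1..n + c - p + 1}"
  have bij: "bij_betw (\<lambda>\<pi>. \<pi> \<circ> swap_shift S d) (E2 n m c) (E2 n m c)" if "S \<in> Pow A" for S
    using swap_shift_bij_E2[OF assms(2,3)] that by (simp add: A_def d_def p_def)
  have few: "p * card {S \<in> Pow A. few_early_buyers n c p (\<pi> \<circ> swap_shift S d)} \<le> card (Pow A)"
    if "\<pi> \<in> E2 n m c" for \<pi>
  proof -
    have "\<pi> \<in> Pi_nmc n m c" using that by (simp add: E2_def)
    from card_swaps_few_early_buyers[OF this \<open>n \<le> m\<close> \<open>1 \<le> c\<close> p]
    have "p * card {S. S \<subseteq> A \<and> few_early_buyers n c p (\<pi> \<circ> swap_shift S d)} \<le> 2 ^ d"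
      unfolding A_def d_def .
    moreover have "card A = d" using p by (simp add: A_def d_def)
    then have "card (Pow A) = 2 ^ d" by (simp add: card_Pow A_def)
    ultimately show ?thesis by (simp only: Pow_iff mem_Collect_eq)
  qed
  have "finite (Pow A)" "Pow A \<noteq> {}" unfolding A_def by blast+
  from card_filter_le_by_averaging[OF finite_E2 this, where f = "\<lambda>S \<pi>. \<pi> \<circ> swap_shift S d",
    OF bij few]
  show ?thesis .
qed

lemma quantile_mono:
  assumes "real_distribution M" and uv: "0 < u" "u \<le> v" "v < 1"
  shows "quantile M u \<le> quantile M v"
proof -
  interpret real_distribution M by fact
  have "eventually (\<lambda>x. v < cdf M x) at_top"
    using order_tendstoD(1)[OF cdf_lim_at_top_prob uv(3)] .
  then obtain x0 where "v < cdf M x0" by (auto simp: eventually_at_top_linorder)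
  then have nonempty: "{x. v \<le> cdf M x} \<noteq> {}" using less_imp_le by blast
  have "eventually (\<lambda>x. cdf M x < u) at_bot"
    using order_tendstoD(2)[OF finite_borel_measure.cdf_lim_at_bot[OF finite_borel_measure_M] uv(1)] .
  then obtain y0 where "\<And>x. x \<le> y0 \<Longrightarrow> cdf M x < u" by (auto simp: eventually_at_bot_linorder)
  then have "bdd_below {x. u \<le> cdf M x}"
    by (intro bdd_belowI[of _ y0]) (meson linorder_not_le mem_Collect_eq order_less_imp_le)
  moreover have "{x. v \<le> cdf M x} \<subseteq> {x. u \<le> cdf M x}" using uv by auto
  ultimately show ?thesis
    unfolding quantile_def by (rule cInf_superset_mono[OF nonempty])
qed

lemma mean_le_of_pointwise_bound:
  fixes f :: "'a \<Rightarrow> real" and k :: nat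
  assumes E: "finite E" "E \<noteq> {}" and k: "0 < k" and \<delta>: "0 \<le> \<delta>"
    and bound: "\<And>x. x \<in> E \<Longrightarrow> f x \<le> \<beta> + (if P x then \<delta> else 0)"
    and rare: "k * card {x \<in> E. P x} \<le> card E"
  shows "(\<Sum>x\<in>E. f x) / card E \<le> \<beta> + \<delta> / k"
proof -
  have "(\<Sum>x\<in>E. f x) \<le> (\<Sum>x\<in>E. \<beta> + (if P x then \<delta> else 0))" by (rule sum_mono) (rule bound)
  also have "\<dots> = card E * \<beta> + card {x \<in> E. P x} * \<delta>"
    using E(1) by (simp add: sum.distrib sum.If_cases Collect_conj_eq Int_commute)
  also have "card {x \<in> E. P x} * \<delta> \<le> card E * \<delta> / k"
  proof -
    have "real k * card {x \<in> E. P x} \<le> card E" using rare by (metis of_nat_le_iff of_nat_mult)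
    then have "real k * (card {x \<in> E. P x} * \<delta>) \<le> card E * \<delta>"
      using mult_right_mono[OF _ \<delta>] by (metis mult.assoc)
    then show ?thesis using k by (simp add: pos_le_divide_eq mult.commute)
  qed
  finally have "(\<Sum>x\<in>E. f x) \<le> card E * (\<beta> + \<delta> / k)" by (simp add: distrib_left)
  moreover have "0 < real (card E)" using E by (simp add: card_gt_0_iff)
  ultimately show ?thesis by (simp add: pos_divide_le_eq mult.commute)
qed

theorem lemma3p3:
  fixes FB FS :: "real measure" and n m c :: nat and q :: "nat \<Rightarrow> real"
  defines "b \<equiv> quantile FB" and "s \<equiv> quantile FS"
      and "N \<equiv> m + n + 2 * c" and "p \<equiv> nat \<lceil>real n / 10\<rceil>"
  assumes "real_distribution FB" and "real_distribution FS"
    and "\<And>u. 0 < u \<Longrightarrow> u < 1 \<Longrightarrow> b u \<ge> s u"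
    and "20 \<le> n" and "n \<le> m" and "1 \<le> c"
    and "\<And>i. i \<in> {1..N} \<Longrightarrow> 0 < q i \<and> q i < 1"
    and "\<And>i j. i \<in> {1..N} \<Longrightarrow> j \<in> {1..N} \<Longrightarrow> i \<le> j \<Longrightarrow> q j \<le> q i"
    and "E2 n m c \<noteq> {}"
  shows "(\<Sum>\<pi>\<in>E2 n m c. OPT_fb b s q \<pi> N - STR_mech b s q \<pi> N) / real (card (E2 n m c))
         \<le> (\<Sum>i\<in>{1..p}. \<Sum>j\<in>{N-p+1..N}. b (q i) - s (q j)) / (real p * real p)"
proof -
  note FB = assms(5) and FS = assms(6) and s_le_b = assms(7) and q = assms(11,12)
  interpret quantile_profile b s q N
  proof
    show "antimono_on {1..N} (\<lambda>i. b (q i))" "antimono_on {1..N} (\<lambda>i. s (q i))"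
      unfolding monotone_on_def b_def s_def using q
      by (auto intro!: quantile_mono[OF FB] quantile_mono[OF FS])
    show "s (q i) \<le> b (q i)" if "i \<in> {1..N}" for i using s_le_b q(1)[OF that] by blast
  qed
  have p: "2 \<le> p" "10 * p \<le> n + 9" using ceiling_tenth_bounds[OF assms(8)] by (simp_all add: p_def)
  have "(\<Sum>\<pi>\<in>E2 n m c. OPT_fb b s q \<pi> N - STR_mech b s q \<pi> N) / real (card (E2 n m c))
      \<le> b (q p) - s (q (N - p + 1)) + (s (q (N - p + 1)) - s (q N)) / p"
  proof (rule mean_le_of_pointwise_bound[OF finite_E2 assms(13)])
    show "OPT_fb b s q \<pi> N - STR_mech b s q \<pi> N \<le> b (q p) - s (q (N - p + 1))
        + (if few_early_buyers n c p \<pi> then s (q (N - p + 1)) - s (q N) else 0)"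
      if "\<pi> \<in> E2 n m c" for \<pi>
      using that p by (intro OPT_minus_STR_le) (auto simp: E2_def N_def)
    show "p * card {\<pi> \<in> E2 n m c. few_early_buyers n c p \<pi>} \<le> card (E2 n m c)"
      unfolding p_def by (rule card_few_early_buyers_E2) (use assms(8-10) in auto)
    show "0 \<le> s (q (N - p + 1)) - s (q N)" using s_antimonoD p by (simp add: N_def)
  qed (use p in auto)
  also have "\<dots> \<le> (\<Sum>i\<in>{1..p}. \<Sum>j\<in>{N-p+1..N}. b (q i) - s (q j)) / (real p * real p)"
    using p by (intro extreme_windows_mean_ge) (auto simp: N_def)
  finally show ?thesis .
qed

end
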